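(* If $\gamma<\frac14$, then for every $r$ and every $x\in S_r$: (1) $|x-\mu_s|\ge\left(\frac12-2\gamma\right)|\mu_r-\mu_s|$ for all $s\ne r$; (2) $|x-\mu_r|\le\frac{1}{1-4\gamma}|x-\mu_s|$ for all $s\ne r$.
   Context: $\mu_1,\dots,\mu_\beta$ are distinct real numbers (means of $\beta$ distributions) and $\nu_1,\dots,\nu_\beta$ are real numbers (cluster centers). $\Delta_s=|\mu_s-\nu_s|$ and $\gamma=\max_{s,\,r\ne s}\frac{\Delta_s}{|\mu_r-\mu_s|}$. For a finite set of real points, $S_r$ is the set of points $x$ with $|x-\nu_r|\le|x-\nu_s|$ for every $s$. *)

theory Defs
  imports Complex_Main
begin

text \<open>Distributions and clusters are indexed by the set {..<beta} (i.e. 1..beta shifted).\<close>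

definition Delta :: "(nat \<Rightarrow> real) \<Rightarrow> (nat \<Rightarrow> real) \<Rightarrow> nat \<Rightarrow> real" where
  "Delta mu nu s = \<bar>mu s - nu s\<bar>"

definition gamma :: "nat \<Rightarrow> (nat \<Rightarrow> real) \<Rightarrow> (nat \<Rightarrow> real) \<Rightarrow> real" where
  "gamma beta mu nu =
     Max {Delta mu nu s / \<bar>mu r - mu s\<bar> | s r. s < beta \<and> r < beta \<and> r \<noteq> s}"

definition S_cell :: "nat \<Rightarrow> (nat \<Rightarrow> real) \<Rightarrow> real set \<Rightarrow> nat \<Rightarrow> real set" where
  "S_cell beta nu X r = {x \<in> X. \<forall>s<beta. \<bar>x - nu r\<bar> \<le> \<bar>x - nu s\<bar>}"

end

theory Submission
  imports Defs
begin

text \<open>Every center lies within \<open>\<gamma> |\<mu>\<^sub>r - \<mu>\<^sub>s|\<close> of its mean, so a point that is closer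
  to \<open>\<nu>\<^sub>r\<close> than to \<open>\<nu>\<^sub>s\<close> is, up to an error \<open>2\<gamma> |\<mu>\<^sub>r - \<mu>\<^sub>s|\<close>, also closer to \<open>\<mu>\<^sub>r\<close>
  than to \<open>\<mu>\<^sub>s\<close>. Combined with the triangle inequality through \<open>x\<close> this yields the lower
  bound (1), and (1) in turn absorbs the error term, giving the ratio bound (2).\<close>

lemma perturbed_voronoi_near:
  fixes x a b p q g :: real
  assumes "\<bar>x - p\<bar> \<le> \<bar>x - q\<bar>" "\<bar>a - p\<bar> \<le> g * \<bar>a - b\<bar>" "\<bar>b - q\<bar> \<le> g * \<bar>a - b\<bar>"
  shows "\<bar>x - a\<bar> \<le> \<bar>x - b\<bar> + 2 * g * \<bar>a - b\<bar>"
  using assms by linarith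

lemma perturbed_voronoi_dist_lower:
  fixes x a b p q g :: real
  assumes "\<bar>x - p\<bar> \<le> \<bar>x - q\<bar>" "\<bar>a - p\<bar> \<le> g * \<bar>a - b\<bar>" "\<bar>b - q\<bar> \<le> g * \<bar>a - b\<bar>"
  shows "(1/2 - g) * \<bar>a - b\<bar> \<le> \<bar>x - b\<bar>"
proof -
  have "\<bar>x - a\<bar> \<le> \<bar>x - b\<bar> + 2 * g * \<bar>a - b\<bar>"
    using perturbed_voronoi_near[OF assms] .
  moreover have "\<bar>a - b\<bar> \<le> \<bar>x - a\<bar> + \<bar>x - b\<bar>"
    by linarith
  ultimately show ?thesis
    by (simp add: algebra_simps)
qed

lemma perturbed_voronoi_dist_ratio:
  fixes x a b p q g :: real
  assumes "\<bar>x - p\<bar> \<le> \<bar>x - q\<bar>" "\<bar>a - p\<bar> \<le> g * \<bar>a - b\<bar>" "\<bar>b - q\<bar> \<le> g * \<bar>a - b\<bar>"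
    and "0 \<le> g" "g < 1/4"
  shows "\<bar>x - a\<bar> \<le> 1 / (1 - 4 * g) * \<bar>x - b\<bar>"
proof -
  have near: "\<bar>x - a\<bar> \<le> \<bar>x - b\<bar> + 2 * g * \<bar>a - b\<bar>"
    using perturbed_voronoi_near[OF assms(1-3)] .
  have "(1/2 - 2 * g) * \<bar>a - b\<bar> \<le> (1/2 - g) * \<bar>a - b\<bar>"
    using \<open>0 \<le> g\<close> by (simp add: mult_right_mono)
  also have "\<dots> \<le> \<bar>x - b\<bar>"
    using perturbed_voronoi_dist_lower[OF assms(1-3)] .
  finally have lower: "(1 - 4 * g) * \<bar>a - b\<bar> \<le> 2 * \<bar>x - b\<bar>"
    by (simp add: algebra_simps)
  have "(1 - 4 * g) * \<bar>x - a\<bar> \<le> (1 - 4 * g) * \<bar>x - b\<bar> + 2 * g * ((1 - 4 * g) * \<bar>a - b\<bar>)"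
    using mult_left_mono[OF near, of "1 - 4 * g"] \<open>g < 1/4\<close> by (simp add: algebra_simps)
  also have "\<dots> \<le> (1 - 4 * g) * \<bar>x - b\<bar> + 2 * g * (2 * \<bar>x - b\<bar>)"
    using lower \<open>0 \<le> g\<close> by (intro add_left_mono mult_left_mono) auto
  finally have "(1 - 4 * g) * \<bar>x - a\<bar> \<le> \<bar>x - b\<bar>"
    by (simp add: algebra_simps)
  then show ?thesis
    using \<open>g < 1/4\<close> by (simp add: pos_le_divide_eq mult.commute)
qed

lemma gamma_ge:
  assumes "s < beta" "r < beta" "r \<noteq> s"
  shows "Delta mu nu s / \<bar>mu r - mu s\<bar> \<le> gamma beta mu nu"
proof -
  let ?A = "{Delta mu nu s / \<bar>mu r - mu s\<bar> | s r. s < beta \<and> r < beta \<and> r \<noteq> s}"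
  have "?A \<subseteq> (\<lambda>(s, r). Delta mu nu s / \<bar>mu r - mu s\<bar>) ` ({..<beta} \<times> {..<beta})"
    by auto
  then have "finite ?A"
    by (rule finite_subset) auto
  moreover have "Delta mu nu s / \<bar>mu r - mu s\<bar> \<in> ?A"
    using assms by blast
  ultimately show ?thesis
    unfolding gamma_def by (rule Max_ge)
qed

lemma gamma_nonneg:
  assumes "s < beta" "r < beta" "r \<noteq> s"
  shows "0 \<le> gamma beta mu nu"
proof -
  have "0 \<le> Delta mu nu s / \<bar>mu r - mu s\<bar>"
    by (simp add: Delta_def)
  then show ?thesis
    using gamma_ge[OF assms, of mu nu] by linarith
qed

lemma Delta_le_gamma_mult:
  assumes "inj_on mu {..<beta}" "s < beta" "r < beta" "r \<noteq> s"
  shows "Delta mu nu s \<le> gamma beta mu nu * \<bar>mu r - mu s\<bar>"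
proof -
  have "mu r \<noteq> mu s"
    using inj_onD[OF assms(1), of r s] assms(2-4) by auto
  then show ?thesis
    using gamma_ge[OF assms(2-4), of mu nu] by (simp add: pos_divide_le_eq)
qed

theorem lemma8:
  fixes beta :: nat and mu nu :: "nat \<Rightarrow> real" and X :: "real set" and r :: nat and x :: real
  assumes "inj_on mu {..<beta}"
    and "finite X"
    and "gamma beta mu nu < 1/4"
    and "r < beta"
    and "x \<in> S_cell beta nu X r"
  shows "(\<forall>s<beta. s \<noteq> r \<longrightarrow> \<bar>x - mu s\<bar> \<ge> (1/2 - 2 * gamma beta mu nu) * \<bar>mu r - mu s\<bar>)
       \<and> (\<forall>s<beta. s \<noteq> r \<longrightarrow> \<bar>x - mu r\<bar> \<le> 1 / (1 - 4 * gamma beta mu nu) * \<bar>x - mu s\<bar>)"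
proof (intro conjI allI impI)
  fix s assume s: "s < beta" "s \<noteq> r"
  let ?g = "gamma beta mu nu"
  have closer: "\<bar>x - nu r\<bar> \<le> \<bar>x - nu s\<bar>"
    using assms(5) s(1) unfolding S_cell_def by auto
  have dr: "\<bar>mu r - nu r\<bar> \<le> ?g * \<bar>mu r - mu s\<bar>"
    using Delta_le_gamma_mult[OF assms(1,4) s(1), where nu = nu] s(2) by (simp add: Delta_def abs_minus_commute)
  have ds: "\<bar>mu s - nu s\<bar> \<le> ?g * \<bar>mu r - mu s\<bar>"
    using Delta_le_gamma_mult[OF assms(1) s(1) assms(4), where nu = nu] s(2) by (simp add: Delta_def)
  have g_nonneg: "0 \<le> ?g"
    using gamma_nonneg[OF s(1) assms(4)] s(2) by simp
  have "(1/2 - 2 * ?g) * \<bar>mu r - mu s\<bar> \<le> (1/2 - ?g) * \<bar>mu r - mu s\<bar>"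
    using g_nonneg by (simp add: mult_right_mono)
  also have "\<dots> \<le> \<bar>x - mu s\<bar>"
    using perturbed_voronoi_dist_lower[OF closer dr ds] .
  finally show "\<bar>x - mu s\<bar> \<ge> (1/2 - 2 * ?g) * \<bar>mu r - mu s\<bar>" .
  show "\<bar>x - mu r\<bar> \<le> 1 / (1 - 4 * ?g) * \<bar>x - mu s\<bar>"
    using perturbed_voronoi_dist_ratio[OF closer dr ds g_nonneg assms(3)] .
qed

end
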